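(* Let $\{\nu_t\}_{t\ge0}\subset\mathcal{P}(\mathbb{T})$ be a weakly continuous $\rhd$-convolution semigroup with $\nu_0=\delta_1$ and $\nu_1=\delta_{e^{i\alpha}}$ for some $\alpha\in\mathbb{R}$. Let $B_2:\mathbb{D}\to\mathbb{C}$ be an analytic function with $\operatorname{Re}B_2\le0$ such that $$\frac{d}{dt}\eta_{\nu_t}(z)=\eta_{\nu_t}(z)\,B_2(\eta_{\nu_t}(z))\qquad\text{for all } t\ge0,\ z\in\mathbb{D}.$$ Then $B_2$ is a constant function with value in $i\mathbb{R}$.
   Context: $\mathbb{T}$ is the unit circle, $\mathbb{D}$ the open unit disc, $\mathcal{P}(\mathbb{T})$ the Borel probability measures on $\mathbb{T}$, and $\delta_a$ the Dirac mass at $a$. For $\nu\in\mathcal{P}(\mathbb{T})$ let $\psi_\nu(z)=\int\frac{z\zeta}{1-z\zeta}d\nu(\zeta)$ and $\eta_\nu=\psi_\nu/(1+\psi_\nu)$ on $\mathbb{D}$; $\eta_\nu$ determines $\nu$. The multiplicative monotone convolution $\nu_1\rhd\nu_2$ is defined by $\eta_{\nu_1\rhd\nu_2}=\eta_{\nu_1}\circ\eta_{\nu_2}$. A weakly continuous $\rhd$-convolution semigroup is a family $\{\nu_t\}_{t\ge0}$ with $\nu_{s+t}=\nu_s\rhd\nu_t$ for all $s,t\ge0$ and $t\mapsto\nu_t$ weakly continuous. *)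

theory Defs
  imports "HOL-Probability.Probability"
begin

text \<open>Borel probability measures on the unit circle T, represented as probability
measures on the Borel sets of the complex plane that are concentrated on T.\<close>
definition circle_prob :: "complex measure \<Rightarrow> bool" where
  "circle_prob \<nu> \<longleftrightarrow> prob_space \<nu> \<and> sets \<nu> = sets borel \<and>
     emeasure \<nu> (sphere 0 1) = 1"

definition psi_tr :: "complex measure \<Rightarrow> complex \<Rightarrow> complex" where
  "psi_tr \<nu> z = (\<integral>\<zeta>. z * \<zeta> / (1 - z * \<zeta>) \<partial>\<nu>)"

definition eta_tr :: "complex measure \<Rightarrow> complex \<Rightarrow> complex" where
  "eta_tr \<nu> z = psi_tr \<nu> z / (1 + psi_tr \<nu> z)"

definition is_mon_conv :: "complex measure \<Rightarrow> complex measure \<Rightarrow> complex measure \<Rightarrow> bool" where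
  "is_mon_conv \<nu>1 \<nu>2 \<mu> \<longleftrightarrow> (\<forall>z\<in>ball 0 1. eta_tr \<mu> z = eta_tr \<nu>1 (eta_tr \<nu>2 z))"

definition weakly_cont_mon_semigroup :: "(real \<Rightarrow> complex measure) \<Rightarrow> bool" where
  "weakly_cont_mon_semigroup \<nu> \<longleftrightarrow>
     (\<forall>t\<ge>0. circle_prob (\<nu> t)) \<and>
     (\<forall>s\<ge>0. \<forall>t\<ge>0. is_mon_conv (\<nu> s) (\<nu> t) (\<nu> (s + t))) \<and>
     (\<forall>f :: complex \<Rightarrow> real. continuous_on (sphere 0 1) f \<longrightarrow>
        continuous_on {0..} (\<lambda>t. \<integral>\<zeta>. f \<zeta> \<partial>(\<nu> t)))"

end

theory Submission
  imports Defs "HOL-Complex_Analysis.Complex_Analysis"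
begin

(* Along an orbit w t = eta (nu t) z one has d/dt |w t|^2 = 2 |w t|^2 Re B2 (w t) <= 0, so |w t|
   is nonincreasing. Since nu 0 and nu 1 are point masses on the circle, w 0 = z and
   w 1 = cis alpha * z have the same modulus; hence |w t| is constant on [0,1], and its derivative
   2 |z|^2 Re B2 z at t = 0 vanishes. So Re B2 = 0 on the punctured disc, then on the disc by
   continuity, and by the open mapping theorem B2 is constant. *)

lemma has_real_derivative_norm_power2:
  fixes w :: "real \<Rightarrow> complex"
  assumes "(w has_vector_derivative w t * b) (at t within S)"
  shows "((\<lambda>s. (norm (w s))\<^sup>2) has_real_derivative 2 * (norm (w t))\<^sup>2 * Re b) (at t within S)"
proof -
  have norm_eq: "(norm z)\<^sup>2 = Re (z * cnj z)" for z :: complex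
    by (metis Re_complex_of_real complex_norm_square)
  have "((\<lambda>s. Re (w s * cnj (w s))) has_real_derivative
          Re (w t * cnj (w t * b) + w t * b * cnj (w t))) (at t within S)"
    by (intro has_field_derivative_Re has_vector_derivative_mult has_vector_derivative_cnj assms)
  moreover have "Re (w t * cnj (w t * b) + w t * b * cnj (w t)) = 2 * Re (w t * cnj (w t)) * Re b"
    by (simp add: algebra_simps)
  ultimately show ?thesis
    unfolding norm_eq by simp
qed

(* The sign of the derivative is only known below the level c (inside the disc), so staying below c
   is proved first: the first time h reached a level between h a and c would contradict
   monotonicity before that time. *)
lemma stays_below_if_nonincreasing_below:
  fixes h :: "real \<Rightarrow> real"
  assumes cont: "continuous_on {a..b} h" and start: "h a < c"
    and deriv: "\<And>t. a < t \<Longrightarrow> t < b \<Longrightarrow> h t < c \<Longrightarrow> \<exists>D. (h has_real_derivative D) (at t) \<and> D \<le> 0"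
  shows "\<forall>t\<in>{a..b}. h t < c"
proof (rule ccontr)
  assume "\<not> ?thesis"
  then obtain t where t: "t \<in> {a..b}" "c \<le> h t" by auto
  define m where "m = (h a + c) / 2"
  have m: "h a < m" "m < c" using start unfolding m_def by auto
  define S where "S = {a..b} \<inter> h -` {m..}"
  have "closed S"
    unfolding S_def by (rule continuous_closed_preimage[OF cont]) auto
  then have "compact S"
    unfolding S_def by (simp add: compact_eq_bounded_closed bounded_Int)
  moreover have "S \<noteq> {}" using t m unfolding S_def by auto
  ultimately obtain s where s: "s \<in> S" "\<And>u. u \<in> S \<Longrightarrow> s \<le> u"
    using compact_attains_inf by metis
  have s_bounds: "a \<le> s" "s \<le> b" "m \<le> h s" using s(1) unfolding S_def by auto
  have below_m: "h u < m" if "a < u" "u < s" for u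
  proof -
    have "u \<notin> S" using s(2) that(2) by fastforce
    then show ?thesis using that s_bounds unfolding S_def by auto
  qed
  have "h s \<le> h a"
  proof (rule DERIV_nonpos_imp_decreasing_open[OF \<open>a \<le> s\<close>])
    fix u assume "a < u" "u < s"
    moreover have "h u < c" using below_m[OF \<open>a < u\<close> \<open>u < s\<close>] m by simp
    ultimately show "\<exists>D. (h has_real_derivative D) (at u) \<and> D \<le> 0"
      using deriv s_bounds by simp
  next
    show "continuous_on {a..s} h" using cont s_bounds by (auto intro: continuous_on_subset)
  qed
  then show False using s_bounds m by simp
qed

lemma nonincreasing_while_below:
  fixes h :: "real \<Rightarrow> real"
  assumes cont: "continuous_on {a..b} h" and start: "h a < c"
    and deriv: "\<And>t. a < t \<Longrightarrow> t < b \<Longrightarrow> h t < c \<Longrightarrow> \<exists>D. (h has_real_derivative D) (at t) \<and> D \<le> 0"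
    and st: "a \<le> s" "s \<le> t" "t \<le> b"
  shows "h t \<le> h s"
proof (rule DERIV_nonpos_imp_decreasing_open[OF \<open>s \<le> t\<close>])
  have below: "\<forall>u\<in>{a..b}. h u < c"
    by (rule stays_below_if_nonincreasing_below[OF cont start deriv])
  show "\<exists>D. (h has_real_derivative D) (at u) \<and> D \<le> 0" if "s < u" "u < t" for u
    using deriv[of u] below that st by simp
  show "continuous_on {s..t} h" using cont st by (auto intro: continuous_on_subset)
qed

lemma derivative_zero_if_constant_right:
  fixes h :: "real \<Rightarrow> real"
  assumes "(h has_real_derivative D) (at a within {a..})" and "a < b"
    and "\<And>t. t \<in> {a..b} \<Longrightarrow> h t = h a"
  shows "D = 0"
proof -
  have "(h has_real_derivative D) (at a within {a..b})"
    using assms(1) by (rule DERIV_subset) auto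
  then have "((\<lambda>_. h a) has_real_derivative D) (at a within {a..b})"
  proof (rule has_field_derivative_transform_within[where d = 1])
    show "h t = h a" if "t \<in> {a..b}" for t using assms(3) that .
  qed (use assms(2) in auto)
  moreover have "at a within {a..b} \<noteq> bot"
    using assms(2) by (simp add: at_within_Icc_at_right)
  ultimately show ?thesis
    using vector_derivative_unique_within[of a "{a..b}" "\<lambda>_. h a" D 0]
    unfolding has_real_derivative_iff_has_vector_derivative[symmetric] by simp
qed

lemma Re_zero_if_norm_returns:
  fixes w :: "real \<Rightarrow> complex" and B :: "complex \<Rightarrow> complex"
  assumes deriv: "\<And>t. 0 \<le> t \<Longrightarrow> (w has_vector_derivative w t * B (w t)) (at t within {0..})"
    and Re_nonpos: "\<And>u. u \<in> ball 0 1 \<Longrightarrow> Re (B u) \<le> 0"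
    and start: "w 0 = z" and z: "z \<in> ball 0 1" "z \<noteq> 0"
    and return: "norm (w 1) = norm z"
  shows "Re (B z) = 0"
proof -
  define h where "h t = (norm (w t))\<^sup>2" for t
  have h_deriv: "(h has_real_derivative 2 * h t * Re (B (w t))) (at t within {0..})"
    if "0 \<le> t" for t
    unfolding h_def by (rule has_real_derivative_norm_power2[OF deriv[OF that]])
  have h_cont: "continuous_on {0..1} h"
  proof (rule continuous_on_subset)
    show "continuous_on {0..} h"
      unfolding continuous_on_eq_continuous_within by (auto intro: DERIV_continuous h_deriv)
  qed auto
  have h_start: "h 0 < 1"
    using z start by (simp add: h_def power_less_one_iff)
  have h_deriv_nonpos: "\<exists>D. (h has_real_derivative D) (at t) \<and> D \<le> 0"
    if "0 < t" "h t < 1" for t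
  proof -
    have "at t within {0..} = at t"
      using that(1) by (intro at_within_interior) auto
    moreover have "Re (B (w t)) \<le> 0"
      using Re_nonpos that(2) by (simp add: h_def power_less_one_iff)
    ultimately show ?thesis
      using h_deriv[of t] that(1) by (auto simp: h_def mult_nonneg_nonpos)
  qed
  have h_const: "h t = h 0" if "t \<in> {0..1}" for t
  proof -
    have "h t \<le> h 0" "h 1 \<le> h t"
      using that by (auto intro!: nonincreasing_while_below[OF h_cont h_start h_deriv_nonpos])
    moreover have "h 1 = h 0"
      using start return by (simp add: h_def)
    ultimately show ?thesis by simp
  qed
  have "2 * h 0 * Re (B (w 0)) = 0"
    by (rule derivative_zero_if_constant_right[OF h_deriv zero_less_one h_const]) simp
  moreover have "h 0 \<noteq> 0"
    using start z by (simp add: h_def)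
  ultimately show ?thesis
    using start by simp
qed

lemma eta_tr_return:
  assumes "norm z < 1" "norm a = 1"
  shows "eta_tr (return borel a) z = z * a"
proof -
  have "(\<lambda>\<zeta>. z * \<zeta> / (1 - z * \<zeta>)) \<in> borel_measurable borel" by measurable
  then have psi: "psi_tr (return borel a) z = z * a / (1 - z * a)"
    unfolding psi_tr_def by (simp add: integral_return)
  have "norm (z * a) < 1"
    using assms by (simp add: norm_mult)
  then have "1 - z * a \<noteq> 0" by auto
  then show ?thesis
    unfolding eta_tr_def psi by (simp add: field_simps)
qed

lemma holomorphic_constant_on_if_Re_constant:
  assumes holo: "f holomorphic_on S" and "open S" "connected S"
    and Re_const: "\<And>z. z \<in> S \<Longrightarrow> Re (f z) = c"
  shows "f constant_on S"
proof (rule ccontr)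
  assume nonconst: "\<not> f constant_on S"
  then obtain z where "z \<in> S"
    unfolding constant_on_def by blast
  have "open (f ` S)"
    using open_mapping_thm[OF holo \<open>open S\<close> \<open>connected S\<close> \<open>open S\<close> order.refl nonconst] .
  then obtain e where "e > 0" and e: "ball (f z) e \<subseteq> f ` S"
    using \<open>z \<in> S\<close> open_contains_ball by blast
  then have "f z + of_real (e / 2) \<in> f ` S"
    by (intro subsetD[OF e]) (simp add: dist_norm)
  then obtain x where "x \<in> S" "f x = f z + of_real (e / 2)"
    by auto
  then show False
    using Re_const[of x] Re_const[OF \<open>z \<in> S\<close>] \<open>e > 0\<close> by simp
qed

theorem proposition5p5:
  fixes \<nu> :: "real \<Rightarrow> complex measure" and \<alpha> :: real and B2 :: "complex \<Rightarrow> complex"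
  assumes "weakly_cont_mon_semigroup \<nu>"
    and "\<nu> 0 = return borel 1"
    and "\<nu> 1 = return borel (cis \<alpha>)"
    and "B2 holomorphic_on ball 0 1"
    and "\<forall>z\<in>ball 0 1. Re (B2 z) \<le> 0"
    and "\<forall>t\<ge>0. \<forall>z\<in>ball 0 1.
           ((\<lambda>s. eta_tr (\<nu> s) z) has_vector_derivative
              (eta_tr (\<nu> t) z * B2 (eta_tr (\<nu> t) z))) (at t within {0..})"
  shows "\<exists>c. Re c = 0 \<and> (\<forall>z\<in>ball 0 1. B2 z = c)"
  \<comment> \<open>Only the endpoint values of the semigroup are needed.\<close>
proof -
  have Re_punctured: "Re (B2 z) = 0" if z: "z \<in> ball 0 1" "z \<noteq> 0" for z
  proof (rule Re_zero_if_norm_returns[OF _ _ _ z])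
    show "((\<lambda>s. eta_tr (\<nu> s) z) has_vector_derivative
            eta_tr (\<nu> t) z * B2 (eta_tr (\<nu> t) z)) (at t within {0..})" if "0 \<le> t" for t
      using assms(6) z(1) that by blast
    show "eta_tr (\<nu> 0) z = z" "norm (eta_tr (\<nu> 1) z) = norm z"
      using z by (simp_all add: assms(2,3) eta_tr_return norm_mult)
  qed (use assms(5) in blast)
  have "isCont B2 0"
    using holomorphic_on_imp_continuous_on[OF assms(4)]
    by (simp add: continuous_on_eq_continuous_at)
  then have "((\<lambda>z. Re (B2 z)) \<longlongrightarrow> Re (B2 0)) (at 0)"
    by (intro tendsto_Re) (simp add: isCont_def)
  moreover have "((\<lambda>z. Re (B2 z)) \<longlongrightarrow> 0) (at 0)"
    by (rule tendsto_eventually) (auto simp: eventually_at intro!: exI[of _ 1] Re_punctured)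
  ultimately have "Re (B2 0) = 0"
    using tendsto_unique[OF at_neq_bot] by blast
  then have Re_zero: "Re (B2 z) = 0" if "z \<in> ball 0 1" for z
    using Re_punctured that by blast
  then have "B2 constant_on ball 0 1"
    by (rule holomorphic_constant_on_if_Re_constant[OF assms(4) open_ball connected_ball])
  then obtain c where c: "\<forall>z\<in>ball 0 1. B2 z = c"
    unfolding constant_on_def by blast
  then have "Re c = 0"
    using Re_zero[of 0] by simp
  with c show ?thesis by blast
qed

end
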